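(* Let $\mathcal N$ be a finite $k$-bounded Petri net ($k\ge1$) and $(\mathcal N^U,\lambda)$ an initial branching process of $\mathcal N$. Then every cut of $\mathcal N^U$ is finite.
   Context: A Petri net $(\mathcal P,\mathcal T,\mathcal F,\mathit{In})$ has disjoint places $\mathcal P$ and transitions $\mathcal T$, a flow relation $\mathcal F$ that is a multiset over $(\mathcal P\times\mathcal T)\cup(\mathcal T\times\mathcal P)$, and a finite multiset $\mathit{In}$ over $\mathcal P$; ${}^\bullet x(y)=\mathcal F(y,x)$, $x^\bullet(y)=\mathcal F(x,y)$, and every transition has finite nonempty pre- and postcondition. A marking is a finite multiset of places; $t$ is enabled in $M$ if ${}^\bullet t\subseteq M$, firing gives $M-{}^\bullet t+t^\bullet$; reachable markings are those obtained from $\mathit{In}$ by finitely many firings. The net is finite if it has finitely many places and transitions, and $k$-bounded if $M(p)\le k$ for every reachable marking $M$ and place $p$. For a map $f$ and a multiset $M$, $f[M](y)=\sum_{x:f(x)=y}M(x)$. Let $<$ be the transitive closure of $\{(x,y)\mid\mathcal F(x,y)>0\}$ and $\le$ its reflexive-transitive closure; nodes $x,y$ are in conflict if there is a place $p\ne x,y$ and distinct transitions $t_1,t_2\in p^\bullet$ with $t_1\le x$, $t_2\le y$; concurrent if neither causally related nor in conflict. An occurrence net is a Petri net in which pre- and postconditions of transitions are sets, every place has at most one incoming transition, $\mathit{In}=\{p\mid{}^\bullet p=\emptyset\}$, $\mathcal F^{-1}$ is well-founded, and no transition is in conflict with itself. A cut is a maximal set of pairwise concurrent places. A homomorphism from $\mathcal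 N_1$ to $\mathcal N_2$ is a map $\lambda$ sending places to places and transitions to transitions with $\lambda[{}^\bullet t]={}^\bullet\lambda(t)$ and $\lambda[t^\bullet]=\lambda(t)^\bullet$; it is initial if $\lambda[\mathit{In}_1]=\mathit{In}_2$. An initial branching process of $\mathcal N$ is a pair $(\mathcal N^U,\lambda)$ with $\mathcal N^U$ an occurrence net and $\lambda$ an initial homomorphism $\mathcal N^U\to\mathcal N$ such that ${}^\bullet t_1={}^\bullet t_2$ and $\lambda(t_1)=\lambda(t_2)$ imply $t_1=t_2$. *)

theory Defs
  imports Main
begin

record 'n petri_net =
  places :: "'n set"
  trans  :: "'n set"
  flow   :: "'n \<Rightarrow> 'n \<Rightarrow> nat"
  init   :: "'n \<Rightarrow> nat"

definition preset :: "('n, 'z) petri_net_scheme \<Rightarrow> 'n \<Rightarrow> 'n set" where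
  "preset N x = {y. flow N y x > 0}"

definition postset :: "('n, 'z) petri_net_scheme \<Rightarrow> 'n \<Rightarrow> 'n set" where
  "postset N x = {y. flow N x y > 0}"

definition petri_net :: "('n, 'z) petri_net_scheme \<Rightarrow> bool" where
  "petri_net N \<longleftrightarrow>
     places N \<inter> trans N = {} \<and>
     (\<forall>x y. flow N x y > 0 \<longrightarrow>
        (x \<in> places N \<and> y \<in> trans N) \<or> (x \<in> trans N \<and> y \<in> places N)) \<and>
     finite {p. init N p > 0} \<and> (\<forall>p. init N p > 0 \<longrightarrow> p \<in> places N) \<and>
     (\<forall>t\<in>trans N. finite (preset N t) \<and> preset N t \<noteq> {} \<and>
                     finite (postset N t) \<and> postset N t \<noteq> {})"

definition enabled :: "('n, 'z) petri_net_scheme \<Rightarrow> ('n \<Rightarrow> nat) \<Rightarrow> 'n \<Rightarrow> bool" where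
  "enabled N M t \<longleftrightarrow> t \<in> trans N \<and> (\<forall>p. flow N p t \<le> M p)"

definition fire :: "('n, 'z) petri_net_scheme \<Rightarrow> ('n \<Rightarrow> nat) \<Rightarrow> 'n \<Rightarrow> ('n \<Rightarrow> nat)" where
  "fire N M t = (\<lambda>p. M p - flow N p t + flow N t p)"

inductive reachable :: "('n, 'z) petri_net_scheme \<Rightarrow> ('n \<Rightarrow> nat) \<Rightarrow> bool"
  for N where
  init_reach: "reachable N (init N)"
| fire_reach: "reachable N M \<Longrightarrow> enabled N M t \<Longrightarrow> reachable N (fire N M t)"

definition finite_net :: "('n, 'z) petri_net_scheme \<Rightarrow> bool" where
  "finite_net N \<longleftrightarrow> finite (places N) \<and> finite (trans N)"

definition k_bounded :: "('n, 'z) petri_net_scheme \<Rightarrow> nat \<Rightarrow> bool" where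
  "k_bounded N k \<longleftrightarrow> (\<forall>M p. reachable N M \<longrightarrow> p \<in> places N \<longrightarrow> M p \<le> k)"

definition flow_rel :: "('n, 'z) petri_net_scheme \<Rightarrow> ('n \<times> 'n) set" where
  "flow_rel N = {(x, y). flow N x y > 0}"

definition causal_lt :: "('n, 'z) petri_net_scheme \<Rightarrow> 'n \<Rightarrow> 'n \<Rightarrow> bool" where
  "causal_lt N x y \<longleftrightarrow> (x, y) \<in> (flow_rel N)\<^sup>+"

definition causal_le :: "('n, 'z) petri_net_scheme \<Rightarrow> 'n \<Rightarrow> 'n \<Rightarrow> bool" where
  "causal_le N x y \<longleftrightarrow> (x, y) \<in> (flow_rel N)\<^sup>*"

definition conflict :: "('n, 'z) petri_net_scheme \<Rightarrow> 'n \<Rightarrow> 'n \<Rightarrow> bool" where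
  "conflict N x y \<longleftrightarrow>
     (\<exists>p t1 t2. p \<in> places N \<and> p \<noteq> x \<and> p \<noteq> y \<and>
        t1 \<in> postset N p \<and> t2 \<in> postset N p \<and> t1 \<noteq> t2 \<and>
        causal_le N t1 x \<and> causal_le N t2 y)"

definition concurrent :: "('n, 'z) petri_net_scheme \<Rightarrow> 'n \<Rightarrow> 'n \<Rightarrow> bool" where
  "concurrent N x y \<longleftrightarrow>
     \<not> causal_lt N x y \<and> \<not> causal_lt N y x \<and> \<not> conflict N x y"

definition pairwise_concurrent_places :: "('n, 'z) petri_net_scheme \<Rightarrow> 'n set \<Rightarrow> bool" where
  "pairwise_concurrent_places N C \<longleftrightarrow>
     C \<subseteq> places N \<and> (\<forall>x\<in>C. \<forall>y\<in>C. x \<noteq> y \<longrightarrow> concurrent N x y)"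

definition is_cut :: "('n, 'z) petri_net_scheme \<Rightarrow> 'n set \<Rightarrow> bool" where
  "is_cut N C \<longleftrightarrow> pairwise_concurrent_places N C \<and>
     (\<forall>D. pairwise_concurrent_places N D \<longrightarrow> C \<subseteq> D \<longrightarrow> D = C)"

definition occurrence_net :: "('n, 'z) petri_net_scheme \<Rightarrow> bool" where
  "occurrence_net N \<longleftrightarrow>
     petri_net N \<and>
     (\<forall>x y. flow N x y \<le> 1) \<and>
     (\<forall>p\<in>places N. \<forall>t1 t2. t1 \<in> preset N p \<longrightarrow> t2 \<in> preset N p \<longrightarrow> t1 = t2) \<and>
     (\<forall>p. init N p = (if p \<in> places N \<and> preset N p = {} then 1 else 0)) \<and>
     wf (flow_rel N) \<and>
     (\<forall>t\<in>trans N. \<not> conflict N t t)"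

definition mset_image :: "('a \<Rightarrow> 'b) \<Rightarrow> ('a \<Rightarrow> nat) \<Rightarrow> ('b \<Rightarrow> nat)" where
  "mset_image f M = (\<lambda>y. \<Sum>x\<in>{x. f x = y \<and> M x > 0}. M x)"

definition homomorphism ::
  "('u, 'z1) petri_net_scheme \<Rightarrow> ('n, 'z2) petri_net_scheme \<Rightarrow> ('u \<Rightarrow> 'n) \<Rightarrow> bool" where
  "homomorphism N1 N2 h \<longleftrightarrow>
     (\<forall>p\<in>places N1. h p \<in> places N2) \<and>
     (\<forall>t\<in>trans N1. h t \<in> trans N2) \<and>
     (\<forall>t\<in>trans N1. mset_image h (\<lambda>p. flow N1 p t) = (\<lambda>q. flow N2 q (h t)) \<and>
                    mset_image h (\<lambda>p. flow N1 t p) = (\<lambda>q. flow N2 (h t) q))"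

definition initial_homomorphism ::
  "('u, 'z1) petri_net_scheme \<Rightarrow> ('n, 'z2) petri_net_scheme \<Rightarrow> ('u \<Rightarrow> 'n) \<Rightarrow> bool" where
  "initial_homomorphism N1 N2 h \<longleftrightarrow>
     homomorphism N1 N2 h \<and> mset_image h (init N1) = init N2"

definition branching_process ::
  "('n, 'z2) petri_net_scheme \<Rightarrow> ('u, 'z1) petri_net_scheme \<Rightarrow> ('u \<Rightarrow> 'n) \<Rightarrow> bool" where
  "branching_process N NU h \<longleftrightarrow>
     occurrence_net NU \<and> initial_homomorphism NU N h \<and>
     (\<forall>t1\<in>trans NU. \<forall>t2\<in>trans NU.
        preset NU t1 = preset NU t2 \<longrightarrow> h t1 = h t2 \<longrightarrow> t1 = t2)"

end

theory Submission
  imports Defs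
begin

text \<open>
  A finite set X of pairwise concurrent places of the unfolding lies in the cut of the
  configuration formed by its causal past. Firing the events of a configuration in an
  order compatible with causality shows that the image of its cut under \<open>h\<close> is a
  reachable marking of N, so by k-boundedness at most k places of X are mapped to any
  place of N, and X has at most k |P| elements. An infinite cut would contain such an X
  with k |P| + 1 elements.
\<close>

lemma mset_image_0_1:
  assumes "\<And>x. M x \<le> 1"
  shows "mset_image f M y = card {x. f x = y \<and> M x > 0}"
proof -
  have "mset_image f M y = (\<Sum>x\<in>{x. f x = y \<and> M x > 0}. 1)"
    unfolding mset_image_def using assms by (intro sum.cong) (auto intro: le_antisym)
  then show ?thesis by simp
qed

lemma finite_acyclic_has_maximal:
  assumes "finite A" and "A \<noteq> {}" and "acyclic r"
  obtains m where "m \<in> A" and "\<And>b. b \<in> A \<Longrightarrow> (m, b) \<notin> r"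
proof -
  have "wf ((r \<inter> A \<times> A)\<inverse>)"
    using assms by (intro finite_acyclic_wf_converse) (auto intro: acyclic_subset)
  then obtain m where "m \<in> A" and "\<And>b. (b, m) \<in> (r \<inter> A \<times> A)\<inverse> \<Longrightarrow> b \<notin> A"
    using assms(2) wf_eq_minimal by (metis equals0I)
  then show thesis using that by blast
qed

lemma card_filter_Diff_Un:
  assumes "finite B" and "S \<subseteq> B" and "T \<inter> B = {}" and "finite T"
  shows "card {x \<in> B - S \<union> T. f x = y}
           = card {x \<in> B. f x = y} - card {x \<in> S. f x = y} + card {x \<in> T. f x = y}"
proof -
  let ?B = "{x \<in> B. f x = y}" and ?S = "{x \<in> S. f x = y}" and ?T = "{x \<in> T. f x = y}"
  have "{x \<in> B - S \<union> T. f x = y} = (?B - ?S) \<union> ?T"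
    by auto
  moreover have "card ((?B - ?S) \<union> ?T) = card (?B - ?S) + card ?T"
    using assms by (intro card_Un_disjoint) auto
  moreover have "card (?B - ?S) = card ?B - card ?S"
    using assms(1,2) by (intro card_Diff_subset) (auto intro: finite_subset)
  ultimately show ?thesis by simp
qed

locale branching_proc =
  fixes N :: "'n petri_net" and NU :: "'u petri_net" and h :: "'u \<Rightarrow> 'n"
  assumes branching_process: "branching_process N NU h"
begin

lemma occurrence_net_NU: "occurrence_net NU"
  using branching_process by (simp add: branching_process_def)

lemma petri_net_NU: "petri_net NU"
  using occurrence_net_NU by (simp add: occurrence_net_def)

lemma places_trans_disjoint: "p \<in> places NU \<Longrightarrow> p \<notin> trans NU"
  using petri_net_NU by (auto simp: petri_net_def)

lemma flow_pos_nodes: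
  "flow NU x y > 0 \<Longrightarrow> x \<in> places NU \<and> y \<in> trans NU \<or> x \<in> trans NU \<and> y \<in> places NU"
  using petri_net_NU by (simp add: petri_net_def)

lemma flow_le_1: "flow NU x y \<le> 1"
  using occurrence_net_NU by (simp add: occurrence_net_def)

lemma preset_place_unique:
  "p \<in> places NU \<Longrightarrow> t1 \<in> preset NU p \<Longrightarrow> t2 \<in> preset NU p \<Longrightarrow> t1 = t2"
  using occurrence_net_NU by (simp add: occurrence_net_def)

lemma init_occurrence_net: "init NU p = (if p \<in> places NU \<and> preset NU p = {} then 1 else 0)"
  using occurrence_net_NU by (simp add: occurrence_net_def)

lemma wf_flow_rel: "wf (flow_rel NU)"
  using occurrence_net_NU by (simp add: occurrence_net_def)

lemma trans_not_self_conflict: "t \<in> trans NU \<Longrightarrow> \<not> conflict NU t t"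
  using occurrence_net_NU by (simp add: occurrence_net_def)

lemma finite_initial_places: "finite {p. init NU p > 0}"
  using petri_net_NU by (simp add: petri_net_def)

lemma finite_preset_trans: "t \<in> trans NU \<Longrightarrow> finite (preset NU t)"
  and finite_postset_trans: "t \<in> trans NU \<Longrightarrow> finite (postset NU t)"
  using petri_net_NU by (simp_all add: petri_net_def)

lemma homomorphism_h: "homomorphism NU N h"
  and mset_image_init: "mset_image h (init NU) = init N"
  using branching_process by (simp_all add: branching_process_def initial_homomorphism_def)

lemma flow_rel_iff_preset: "(x, y) \<in> flow_rel NU \<longleftrightarrow> x \<in> preset NU y"
  by (simp add: flow_rel_def preset_def)

lemma postset_iff_preset: "y \<in> postset NU x \<longleftrightarrow> x \<in> preset NU y"
  by (simp add: preset_def postset_def)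

lemma not_flow_trancl_refl: "(x, x) \<notin> (flow_rel NU)\<^sup>+"
  using wf_acyclic[OF wf_flow_rel] by (simp add: acyclic_def)

lemma preset_trans_places: "t \<in> trans NU \<Longrightarrow> p \<in> preset NU t \<Longrightarrow> p \<in> places NU"
  unfolding preset_def using flow_pos_nodes places_trans_disjoint by blast

lemma postset_trans_places: "t \<in> trans NU \<Longrightarrow> p \<in> postset NU t \<Longrightarrow> p \<in> places NU"
  unfolding postset_def using flow_pos_nodes places_trans_disjoint by blast

lemma postset_places_trans: "p \<in> places NU \<Longrightarrow> t \<in> postset NU p \<Longrightarrow> t \<in> trans NU"
  unfolding postset_def using flow_pos_nodes places_trans_disjoint by blast

lemma preset_nontrans:
  "x \<notin> trans NU \<Longrightarrow> t \<in> preset NU x \<Longrightarrow> t \<in> trans NU \<and> x \<in> places NU"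
  unfolding preset_def using flow_pos_nodes by blast

lemma finite_preset: "finite (preset NU x)"
proof (cases "x \<in> trans NU")
  case False
  show ?thesis
  proof (cases "preset NU x = {}")
    case False
    then obtain t where "t \<in> preset NU x"
      by blast
    with \<open>x \<notin> trans NU\<close> have "preset NU x = {t}"
      using preset_nontrans preset_place_unique by blast
    then show ?thesis
      by simp
  qed simp
qed (rule finite_preset_trans)

lemma finite_ancestors: "finite {y. (y, x) \<in> (flow_rel NU)\<^sup>*}"
proof (induction x rule: wf_induct[OF wf_flow_rel])
  case (1 x)
  have "{y. (y, x) \<in> (flow_rel NU)\<^sup>*}
          \<subseteq> insert x (\<Union>z\<in>preset NU x. {y. (y, z) \<in> (flow_rel NU)\<^sup>*})"
    by (auto elim: rtranclE simp: flow_rel_iff_preset)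
  moreover have "finite (\<Union>z\<in>preset NU x. {y. (y, z) \<in> (flow_rel NU)\<^sup>*})"
    using 1 finite_preset by (auto simp: flow_rel_iff_preset)
  ultimately show ?case
    using finite_subset by blast
qed

lemma rtrancl_flow_last_step:
  assumes "(t, x) \<in> (flow_rel NU)\<^sup>*" and "t \<noteq> x"
  obtains z where "(t, z) \<in> (flow_rel NU)\<^sup>*" and "z \<in> preset NU x"
  using assms by (cases rule: rtranclE) (auto simp: flow_rel_iff_preset)

text \<open>A place in self-conflict would pass the conflict on to its unique producer.\<close>

lemma not_self_conflict: "\<not> conflict NU x x"
proof
  assume "conflict NU x x"
  then obtain p t1 t2 where p: "p \<in> places NU" and t12: "t1 \<in> postset NU p" "t2 \<in> postset NU p" "t1 \<noteq> t2"
    and le: "(t1, x) \<in> (flow_rel NU)\<^sup>*" "(t2, x) \<in> (flow_rel NU)\<^sup>*"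
    unfolding conflict_def causal_le_def by blast
  have t12_trans: "t1 \<in> trans NU" "t2 \<in> trans NU"
    using p t12 postset_places_trans by blast+
  show False
  proof (cases "x \<in> trans NU")
    case True
    with \<open>conflict NU x x\<close> show False
      using trans_not_self_conflict by blast
  next
    case False
    then have "t1 \<noteq> x" "t2 \<noteq> x"
      using t12_trans by auto
    then obtain z1 z2 where z1: "(t1, z1) \<in> (flow_rel NU)\<^sup>*" "z1 \<in> preset NU x"
      and z2: "(t2, z2) \<in> (flow_rel NU)\<^sup>*" "z2 \<in> preset NU x"
      using le rtrancl_flow_last_step by metis
    have "z1 = z2" and z1_trans: "z1 \<in> trans NU"
      using False z1(2) z2(2) preset_nontrans preset_place_unique by blast+
    then have "conflict NU z1 z1"
      unfolding conflict_def causal_le_def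
      using p t12 z1(1) z2(1) places_trans_disjoint by blast
    then show False
      using trans_not_self_conflict z1_trans by blast
  qed
qed

definition configuration :: "'u set \<Rightarrow> bool" where
  "configuration E \<longleftrightarrow> finite E \<and> E \<subseteq> trans NU \<and>
     (\<forall>t\<in>E. \<forall>p\<in>preset NU t. preset NU p \<subseteq> E) \<and>
     (\<forall>t1\<in>E. \<forall>t2\<in>E. preset NU t1 \<inter> preset NU t2 \<noteq> {} \<longrightarrow> t1 = t2)"

lemma configuration_trans: "configuration E \<Longrightarrow> t \<in> E \<Longrightarrow> t \<in> trans NU"
  unfolding configuration_def by blast

lemma configuration_consumers_unique:
  "configuration E \<Longrightarrow> t1 \<in> E \<Longrightarrow> t2 \<in> E \<Longrightarrow> p \<in> preset NU t1 \<Longrightarrow> p \<in> preset NU t2 \<Longrightarrow> t1 = t2"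
  unfolding configuration_def by blast

text \<open>This is Cut(E) = (Min \<union> post(E)) - pre(E): a place has at most one producer, so
  \<open>preset NU p \<subseteq> E\<close> says that p is initial or produced by E.\<close>

definition cut_of :: "'u set \<Rightarrow> 'u set" where
  "cut_of E = {p \<in> places NU. preset NU p \<subseteq> E \<and> postset NU p \<inter> E = {}}"

definition cut_marking :: "'u set \<Rightarrow> 'n \<Rightarrow> nat" where
  "cut_marking E q = card {p \<in> cut_of E. h p = q}"

lemma finite_cut_of:
  assumes "configuration E"
  shows "finite (cut_of E)"
proof (rule finite_subset)
  show "cut_of E \<subseteq> {p. init NU p > 0} \<union> (\<Union>t\<in>E. postset NU t)"
    by (auto simp: cut_of_def init_occurrence_net postset_iff_preset)
  show "finite ({p. init NU p > 0} \<union> (\<Union>t\<in>E. postset NU t))"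
    using assms finite_initial_places finite_postset_trans by (auto simp: configuration_def)
qed

lemma flow_target_card_preset:
  "t \<in> trans NU \<Longrightarrow> flow N q (h t) = card {p \<in> preset NU t. h p = q}"
  using homomorphism_h mset_image_0_1[of "\<lambda>p. flow NU p t" h q] flow_le_1
  by (simp add: homomorphism_def preset_def conj_commute)

lemma flow_source_card_postset:
  "t \<in> trans NU \<Longrightarrow> flow N (h t) q = card {p \<in> postset NU t. h p = q}"
  using homomorphism_h mset_image_0_1[of "\<lambda>p. flow NU t p" h q] flow_le_1
  by (simp add: homomorphism_def postset_def conj_commute)

lemma cut_marking_empty: "cut_marking {} = init N"
proof
  fix q
  have "init N q = card {p. h p = q \<and> init NU p > 0}"
    using mset_image_0_1[of "init NU" h q] mset_image_init init_occurrence_net by simp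
  also have "\<dots> = cut_marking {} q"
    unfolding cut_marking_def cut_of_def init_occurrence_net by (rule arg_cong[where f = card]) auto
  finally show "cut_marking {} q = init N q" ..
qed

lemma preset_preset_trancl: "x \<in> preset NU p \<Longrightarrow> p \<in> preset NU y \<Longrightarrow> (x, y) \<in> (flow_rel NU)\<^sup>+"
  by (meson flow_rel_iff_preset trancl.simps)

lemma not_preset_preset_self: "p \<in> preset NU t \<Longrightarrow> t \<notin> preset NU p"
  using not_flow_trancl_refl preset_preset_trancl by blast

lemma postset_disjoint_cut_of_Diff: "postset NU t \<inter> cut_of (E - {t}) = {}"
  by (auto simp: cut_of_def postset_iff_preset)

lemma configuration_has_maximal:
  assumes "configuration E" and "E \<noteq> {}"
  obtains t where "t \<in> E" and "\<And>t'. t' \<in> E \<Longrightarrow> (t, t') \<notin> (flow_rel NU)\<^sup>+"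
proof -
  have "acyclic ((flow_rel NU)\<^sup>+)"
    using not_flow_trancl_refl by (simp add: acyclic_def)
  moreover have "finite E"
    using assms(1) by (simp add: configuration_def)
  ultimately show thesis
    using assms(2) that finite_acyclic_has_maximal by metis
qed

context
  fixes E t
  assumes configuration: "configuration E" and event: "t \<in> E"
    and maximal: "\<And>t'. t' \<in> E \<Longrightarrow> (t, t') \<notin> (flow_rel NU)\<^sup>+"
begin

lemmas event_trans = configuration_trans[OF configuration event]

lemma configuration_Diff_maximal: "configuration (E - {t})"
proof -
  have "t \<notin> preset NU p" if "t' \<in> E" and "p \<in> preset NU t'" for t' p
    using that maximal preset_preset_trancl by blast
  then show ?thesis
    using configuration unfolding configuration_def by blast
qed

lemma preset_subset_cut_of_Diff: "preset NU t \<subseteq> cut_of (E - {t})"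
proof
  fix p
  assume p: "p \<in> preset NU t"
  have "p \<in> places NU"
    using p event_trans preset_trans_places by blast
  moreover have "preset NU p \<subseteq> E - {t}"
    using configuration event p not_preset_preset_self unfolding configuration_def by blast
  moreover have "postset NU p \<inter> (E - {t}) = {}"
    using configuration event p configuration_consumers_unique by (auto simp: postset_iff_preset)
  ultimately show "p \<in> cut_of (E - {t})"
    by (simp add: cut_of_def)
qed

lemma postset_subset_cut_of: "postset NU t \<subseteq> cut_of E"
proof
  fix p
  assume p: "p \<in> postset NU t"
  then have "p \<in> places NU"
    using event_trans postset_trans_places by blast
  moreover have "preset NU p \<subseteq> E"
    using p \<open>p \<in> places NU\<close> event preset_place_unique by (auto simp: postset_iff_preset)
  moreover have "postset NU p \<inter> E = {}"
    using p maximal preset_preset_trancl by (force simp: postset_iff_preset)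
  ultimately show "p \<in> cut_of E"
    by (simp add: cut_of_def)
qed

lemma cut_of_eq_fire: "cut_of E = (cut_of (E - {t}) - preset NU t) \<union> postset NU t"
proof (intro equalityI subsetI)
  fix p
  assume "p \<in> cut_of E"
  then show "p \<in> (cut_of (E - {t}) - preset NU t) \<union> postset NU t"
    using event by (auto simp: cut_of_def postset_iff_preset)
next
  fix p
  assume "p \<in> (cut_of (E - {t}) - preset NU t) \<union> postset NU t"
  then show "p \<in> cut_of E"
    using event postset_subset_cut_of by (auto simp: cut_of_def postset_iff_preset)
qed

lemma enabled_cut_marking_Diff: "enabled N (cut_marking (E - {t})) (h t)"
proof -
  have "flow N q (h t) \<le> cut_marking (E - {t}) q" for q
    unfolding flow_target_card_preset[OF event_trans] cut_marking_def
    using preset_subset_cut_of_Diff finite_cut_of[OF configuration_Diff_maximal]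
    by (intro card_mono) auto
  then show ?thesis
    using event_trans homomorphism_h by (simp add: enabled_def homomorphism_def)
qed

lemma cut_marking_eq_fire: "cut_marking E = fire N (cut_marking (E - {t})) (h t)"
proof
  fix q
  have "cut_marking E q = card {p \<in> cut_of (E - {t}) - preset NU t \<union> postset NU t. h p = q}"
    unfolding cut_marking_def using cut_of_eq_fire by simp
  also have "\<dots> = cut_marking (E - {t}) q - flow N q (h t) + flow N (h t) q"
    unfolding cut_marking_def flow_target_card_preset[OF event_trans] flow_source_card_postset[OF event_trans]
    using finite_cut_of[OF configuration_Diff_maximal] preset_subset_cut_of_Diff
      postset_disjoint_cut_of_Diff finite_postset_trans[OF event_trans]
    by (intro card_filter_Diff_Un) auto
  finally show "cut_marking E q = fire N (cut_marking (E - {t})) (h t) q"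
    by (simp add: fire_def)
qed

end

lemma reachable_cut_marking:
  assumes "configuration E"
  shows "reachable N (cut_marking E)"
proof -
  have "finite E"
    using assms by (simp add: configuration_def)
  then show ?thesis
    using assms
  proof (induction E rule: finite_remove_induct)
    case empty
    show ?case
      using cut_marking_empty reachable.init_reach by metis
  next
    case (remove E)
    obtain t where t: "t \<in> E" and maximal: "\<And>t'. t' \<in> E \<Longrightarrow> (t, t') \<notin> (flow_rel NU)\<^sup>+"
      using configuration_has_maximal remove.hyps(2) remove.prems by metis
    have "reachable N (cut_marking (E - {t}))"
      using remove.IH[OF t] configuration_Diff_maximal[OF remove.prems t maximal] by blast
    then show ?case
      using reachable.fire_reach enabled_cut_marking_Diff cut_marking_eq_fire remove.prems t maximal
      by metis
  qed
qed

definition causal_past :: "'u set \<Rightarrow> 'u set" where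
  "causal_past X = {t \<in> trans NU. \<exists>x\<in>X. causal_le NU t x}"

lemma finite_causal_past:
  assumes "finite X"
  shows "finite (causal_past X)"
proof (rule finite_subset)
  show "causal_past X \<subseteq> (\<Union>x\<in>X. {y. (y, x) \<in> (flow_rel NU)\<^sup>*})"
    by (auto simp: causal_past_def causal_le_def)
  show "finite (\<Union>x\<in>X. {y. (y, x) \<in> (flow_rel NU)\<^sup>*})"
    using assms finite_ancestors by blast
qed

lemma causal_past_closed:
  assumes t: "t \<in> causal_past X" and p: "p \<in> preset NU t"
  shows "preset NU p \<subseteq> causal_past X"
proof -
  obtain x where "x \<in> X" and "(t, x) \<in> (flow_rel NU)\<^sup>*"
    using t by (auto simp: causal_past_def causal_le_def)
  then have "(t', x) \<in> (flow_rel NU)\<^sup>*" if "t' \<in> preset NU p" for t'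
    using that p by (meson converse_rtrancl_into_rtrancl flow_rel_iff_preset)
  moreover have "p \<in> places NU"
    using t p preset_trans_places by (auto simp: causal_past_def)
  then have "preset NU p \<subseteq> trans NU"
    using places_trans_disjoint preset_nontrans by blast
  ultimately show ?thesis
    using \<open>x \<in> X\<close> unfolding causal_past_def causal_le_def by blast
qed

context
  fixes X
  assumes co_set: "pairwise_concurrent_places NU X"
begin

lemma co_set_not_causal_lt:
  assumes "x \<in> X" and "y \<in> X"
  shows "\<not> causal_lt NU x y"
proof (cases "x = y")
  case True
  then show ?thesis
    using not_flow_trancl_refl by (simp add: causal_lt_def)
next
  case False
  then show ?thesis
    using co_set assms by (simp add: pairwise_concurrent_places_def concurrent_def)
qed

lemma co_set_not_conflict:
  assumes "x \<in> X" and "y \<in> X"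
  shows "\<not> conflict NU x y"
proof (cases "x = y")
  case True
  then show ?thesis
    using not_self_conflict by simp
next
  case False
  then show ?thesis
    using co_set assms by (simp add: pairwise_concurrent_places_def concurrent_def)
qed

lemma causal_past_consumers_unique:
  assumes t1: "t1 \<in> causal_past X" and t2: "t2 \<in> causal_past X"
    and p: "p \<in> preset NU t1" "p \<in> preset NU t2"
  shows "t1 = t2"
proof (rule ccontr)
  assume "t1 \<noteq> t2"
  obtain x1 x2 where x: "x1 \<in> X" "x2 \<in> X"
    and le: "(t1, x1) \<in> (flow_rel NU)\<^sup>*" "(t2, x2) \<in> (flow_rel NU)\<^sup>*"
    using t1 t2 by (auto simp: causal_past_def causal_le_def)
  have "(p, x1) \<in> (flow_rel NU)\<^sup>+" "(p, x2) \<in> (flow_rel NU)\<^sup>+"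
    using p le by (auto intro: rtrancl_into_trancl2 simp: flow_rel_iff_preset)
  then have "p \<noteq> x1" "p \<noteq> x2"
    using not_flow_trancl_refl by blast+
  moreover have "p \<in> places NU"
    using t1 p preset_trans_places by (auto simp: causal_past_def)
  ultimately have "conflict NU x1 x2"
    unfolding conflict_def causal_le_def
    using p le \<open>t1 \<noteq> t2\<close>
    by (intro exI[of _ p] exI[of _ t1] exI[of _ t2]) (simp add: postset_iff_preset)
  then show False
    using co_set_not_conflict x by blast
qed

lemma configuration_causal_past:
  assumes "finite X"
  shows "configuration (causal_past X)"
proof -
  have "causal_past X \<subseteq> trans NU"
    by (simp add: causal_past_def)
  then show ?thesis
    unfolding configuration_def
    using finite_causal_past[OF assms] causal_past_closed causal_past_consumers_unique by blast
qed

lemma subset_cut_of_causal_past: "X \<subseteq> cut_of (causal_past X)"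
proof
  fix x
  assume x: "x \<in> X"
  then have "x \<in> places NU"
    using co_set by (auto simp: pairwise_concurrent_places_def)
  moreover have "preset NU x \<subseteq> causal_past X"
  proof
    fix t
    assume t: "t \<in> preset NU x"
    then have "t \<in> trans NU"
      using \<open>x \<in> places NU\<close> places_trans_disjoint preset_nontrans by blast
    moreover have "causal_le NU t x"
      using t by (simp add: causal_le_def flow_rel_iff_preset[symmetric] r_into_rtrancl)
    ultimately show "t \<in> causal_past X"
      using x by (auto simp: causal_past_def)
  qed
  moreover have "postset NU x \<inter> causal_past X = {}"
  proof (rule ccontr)
    assume "postset NU x \<inter> causal_past X \<noteq> {}"
    then obtain t y where "x \<in> preset NU t" "y \<in> X" "(t, y) \<in> (flow_rel NU)\<^sup>*"
      by (auto simp: causal_past_def causal_le_def postset_iff_preset)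
    then have "causal_lt NU x y"
      by (auto intro: rtrancl_into_trancl2 simp: causal_lt_def flow_rel_iff_preset)
    then show False
      using co_set_not_causal_lt x \<open>y \<in> X\<close> by blast
  qed
  ultimately show "x \<in> cut_of (causal_past X)"
    by (simp add: cut_of_def)
qed

lemma card_co_set_le:
  assumes "finite X" and "k_bounded N k" and "finite (places N)"
  shows "card X \<le> k * card (places N)"
proof -
  let ?E = "causal_past X"
  have reachable: "reachable N (cut_marking ?E)"
    using reachable_cut_marking configuration_causal_past assms(1) by blast
  have "h ` X \<subseteq> places N"
    using co_set homomorphism_h by (auto simp: pairwise_concurrent_places_def homomorphism_def)
  have "card X = (\<Sum>x\<in>X. 1)"
    by simp
  also have "\<dots> = (\<Sum>q\<in>places N. \<Sum>x\<in>{x \<in> X. h x = q}. 1)"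
    by (rule sum.group[symmetric, OF assms(1,3) \<open>h ` X \<subseteq> places N\<close>])
  also have "\<dots> = (\<Sum>q\<in>places N. card {x \<in> X. h x = q})"
    by simp
  also have "\<dots> \<le> (\<Sum>q\<in>places N. cut_marking ?E q)"
    unfolding cut_marking_def
    using subset_cut_of_causal_past finite_cut_of[OF configuration_causal_past[OF assms(1)]]
    by (intro sum_mono card_mono) auto
  also have "\<dots> \<le> (\<Sum>q\<in>places N. k)"
    using reachable assms(2) by (intro sum_mono) (simp add: k_bounded_def)
  finally show ?thesis
    by (simp add: mult.commute)
qed

end

end

theorem mainTheorem13:
  fixes N :: "'n petri_net" and NU :: "'u petri_net" and h :: "'u \<Rightarrow> 'n" and k :: nat
  assumes "petri_net N" and "finite_net N" and "k \<ge> 1" and "k_bounded N k"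
    and "branching_process N NU h"
    and "is_cut NU C"
  shows "finite C"
proof (rule ccontr)
  assume "infinite C"
  then obtain X where X: "finite X" "card X = k * card (places N) + 1" "X \<subseteq> C"
    using infinite_arbitrarily_large by blast
  have "pairwise_concurrent_places NU C"
    using assms(6) by (simp add: is_cut_def)
  then have "pairwise_concurrent_places NU X"
    using X(3) by (auto simp: pairwise_concurrent_places_def)
  moreover have "finite (places N)"
    using assms(2) by (simp add: finite_net_def)
  ultimately have "card X \<le> k * card (places N)"
    using branching_proc.card_co_set_le[OF branching_proc.intro[OF assms(5)]] X(1) assms(4)
    by blast
  with X(2) show False
    by simp
qed

end
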